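(* Let $H$ be an $n\times n$ matrix with all entries of absolute value $1$, pairwise orthogonal rows $R_0,\dots,R_{n-1}$, and $R_0$ the all-ones vector. Suppose that for all $a,b$ the vector $R_a\circ R_b$ is non-orthogonal to exactly one of the vectors $R_0,\dots,R_{n-1}$. Then there exist a finite Abelian group $G$ of order $n$ and a bijection $\varphi:\{0,\dots,n-1\}\to G$ such that the map $\{i,j\}\mapsto\{\varphi(i),\varphi(j)\}$ is a graph isomorphism from $L(H)$ onto the L-graph of the Fourier matrix of $G$.
   Context: For a square complex matrix $C$ with rows $(c_i)_{i\in I}$, its L-graph $L(C)$ is the simple graph on the set of 2-element multisets $\{i,j\}$ of row indices ($i=j$ allowed), distinct vertices $\{i,j\}$, $\{k,l\}$ being adjacent iff $\langle c_i\circ c_j|c_k\circ c_l\rangle=0$; $\circ$ is the entrywise product, $\langle x|y\rangle=\sum_t\overline{x_t}y_t$. The Fourier matrix of $G=\mathbb{Z}_{d_1}\times\cdots\times\mathbb{Z}_{d_m}$ is $(\chi_j(i))_{i,j\in G}$ with $\chi_a(b)=\exp(\sum_j\frac{2\pi i}{d_j}a_jb_j)$. *)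

theory Defs
  imports Complex_Main "HOL-Library.Multiset"
begin

definition cinner :: "'t set \<Rightarrow> ('t \<Rightarrow> complex) \<Rightarrow> ('t \<Rightarrow> complex) \<Rightarrow> complex" where
  "cinner T x y = (\<Sum>t\<in>T. cnj (x t) * y t)"

definition rowprod :: "('i \<Rightarrow> 't \<Rightarrow> complex) \<Rightarrow> 'i multiset \<Rightarrow> 't \<Rightarrow> complex" where
  "rowprod c M t = prod_mset (image_mset (\<lambda>i. c i t) M)"

text \<open>Vertices of the L-graph: 2-element multisets of row indices (i = j allowed).\<close>
definition Lverts :: "'i set \<Rightarrow> 'i multiset set" where
  "Lverts I = {M. size M = 2 \<and> set_mset M \<subseteq> I}"

definition Ladj :: "'t set \<Rightarrow> ('i \<Rightarrow> 't \<Rightarrow> complex) \<Rightarrow> 'i multiset \<Rightarrow> 'i multiset \<Rightarrow> bool" where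
  "Ladj T c M N \<longleftrightarrow> M \<noteq> N \<and> cinner T (rowprod c M) (rowprod c N) = 0"

definition Lgraph_iso ::
  "'i set \<Rightarrow> 't set \<Rightarrow> ('i \<Rightarrow> 't \<Rightarrow> complex) \<Rightarrow>
   'j set \<Rightarrow> 's set \<Rightarrow> ('j \<Rightarrow> 's \<Rightarrow> complex) \<Rightarrow>
   ('i multiset \<Rightarrow> 'j multiset) \<Rightarrow> bool" where
  "Lgraph_iso I T c J S d f \<longleftrightarrow>
     bij_betw f (Lverts I) (Lverts J) \<and>
     (\<forall>M\<in>Lverts I. \<forall>N\<in>Lverts I. Ladj T c M N \<longleftrightarrow> Ladj S d (f M) (f N))"

text \<open>The group Z_{d_1} x ... x Z_{d_m}, elements represented as lists of residues.\<close>
definition cyc_prod :: "nat list \<Rightarrow> nat list set" where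
  "cyc_prod ds = {x. length x = length ds \<and> (\<forall>j<length ds. x ! j < ds ! j)}"

definition fchar :: "nat list \<Rightarrow> nat list \<Rightarrow> nat list \<Rightarrow> complex" where
  "fchar ds a b = exp (\<Sum>j<length ds. 2 * of_real pi * \<i> * of_nat (a ! j) * of_nat (b ! j) / of_nat (ds ! j))"

definition fourier :: "nat list \<Rightarrow> nat list \<Rightarrow> nat list \<Rightarrow> complex" where
  "fourier ds i j = fchar ds j i"

end

theory Submission
  imports Defs "HOL-Algebra.Multiplicative_Group" "Jordan_Normal_Form.Determinant"
begin

(* Expanding R_a o R_b in the orthogonal basis of rows shows that it is a
   nonzero multiple of R_{a.b}; as distinct rows are never proportional, a.b is a
   commutative, associative, cancellative operation with neutral element 0, so the row
   indices form a finite abelian group (locale hadamard, row_group).  Moreover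
   R_a o R_b is orthogonal to R_c o R_d iff a.b <> c.d.
   For the Fourier matrix of G = Z_{d_1} x ... x Z_{d_m} the same criterion holds with the
   group law of G, by orthogonality and multiplicativity of characters (fourier_pair_orth).
   Hence the L-graphs are isomorphic via any group isomorphism of the row group onto some
   Z_{d_1} x ... x Z_{d_m} (Lgraph_iso_by_pairs).  Such an isomorphism is provided by the
   structure theorem for finite abelian groups (finite_abelian_basis), proved by splitting
   off the cyclic subgroup generated by an element of maximal order (cyclic_complement). *)

lemma lcm_drop_coprime_factor:
  fixes a b q :: nat
  assumes "q dvd a" "coprime q b"
  shows "lcm a (q * b) = lcm a b"
proof (rule dvd_antisym)
  show "lcm a (q * b) dvd lcm a b"
    using assms by (meson divides_mult dvd_lcm1 dvd_lcm2 dvd_trans lcm_least)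
  show "lcm a b dvd lcm a (q * b)"
    by (meson dvd_lcm1 dvd_lcm2 dvd_mult_left dvd_trans lcm_least dvd_triv_right)
qed

lemma lcm_strip_prime_power:
  fixes a b p :: nat
  assumes p: "prime p" and b: "0 < b" "p dvd b" and pa: "p ^ multiplicity p b dvd a"
  obtains b0 where "b0 dvd b" "0 < b0" "b0 < b" "lcm a b0 = lcm a b"
proof -
  have nu: "\<not> is_unit p" using p not_prime_unit by blast
  obtain b0 where b0: "b = p ^ multiplicity p b * b0" "\<not> p dvd b0"
    using multiplicity_decompose'[OF _ nu] b(1) by (metis not_gr0)
  have "multiplicity p b \<noteq> 0" using b0 b(2) by (metis mult_1 power_0)
  then have "1 < p ^ multiplicity p b" using prime_gt_1_nat[OF p] by (intro one_less_power) auto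
  moreover have "0 < b0" using b0(1) b(1) by (cases b0) auto
  ultimately have "b0 < b" using b0(1) mult_less_mono1[of 1 "p ^ multiplicity p b" b0] by simp
  moreover have "lcm a b = lcm a b0"
    using b0 lcm_drop_coprime_factor[OF pa] prime_imp_coprime[OF p] by (metis coprime_power_left_iff)
  ultimately show ?thesis using that \<open>0 < b0\<close> b0(1) by (metis dvd_triv_right)
qed

text \<open>\<open>lcm a b\<close> is the product of coprime divisors of \<open>a\<close> and \<open>b\<close>; this is what produces
  elements of order \<open>lcm (ord x) (ord y)\<close> in abelian groups.  By induction on \<open>a + b\<close>: while
  \<open>a\<close> and \<open>b\<close> share a prime, strip its full power from the argument where it is smaller.\<close>
lemma lcm_coprime_split:
  fixes a b :: nat
  assumes "0 < a" "0 < b"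
  shows "\<exists>a' b'. a' dvd a \<and> b' dvd b \<and> coprime a' b' \<and> a' * b' = lcm a b"
  using assms
proof (induction "a + b" arbitrary: a b rule: less_induct)
  case less
  show ?case
  proof (cases "coprime a b")
    case True
    then show ?thesis by (intro exI[of _ a] exI[of _ b]) (simp add: lcm_coprime)
  next
    case False
    then obtain p where p: "prime p" "p dvd a" "p dvd b"
      by (metis coprime_iff_gcd_eq_1 gcd_dvd1 gcd_dvd2 dvd_trans prime_factor_nat)
    consider "p ^ multiplicity p b dvd a" | "p ^ multiplicity p a dvd b"
      by (metis le_imp_power_dvd multiplicity_dvd nat_le_linear dvd_trans)
    then show ?thesis
    proof cases
      case 1
      then obtain b0 where b0: "b0 dvd b" "0 < b0" "b0 < b" "lcm a b0 = lcm a b"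
        using lcm_strip_prime_power p less.prems by blast
      moreover obtain a' b' where "a' dvd a" "b' dvd b0" "coprime a' b'" "a' * b' = lcm a b0"
        using less.hyps[of a b0] less.prems b0 by auto
      ultimately show ?thesis by (metis dvd_trans)
    next
      case 2
      then obtain a0 where a0: "a0 dvd a" "0 < a0" "a0 < a" "lcm b a0 = lcm b a"
        using lcm_strip_prime_power p less.prems by blast
      moreover obtain a' b' where "a' dvd a0" "b' dvd b" "coprime a' b'" "a' * b' = lcm a0 b"
        using less.hyps[of a0 b] less.prems a0 by auto
      ultimately show ?thesis by (metis dvd_trans lcm.commute)
    qed
  qed
qed

lemma cyc_prod_Nil: "cyc_prod [] = {[]}"
  by (auto simp: cyc_prod_def)

lemma cyc_prod_Cons: "cyc_prod (d # ds) = {x # xs | x xs. x < d \<and> xs \<in> cyc_prod ds}"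
proof (intro equalityI subsetI)
  fix z assume "z \<in> cyc_prod (d # ds)"
  then have z: "length z = Suc (length ds)" "\<forall>j<Suc (length ds). z ! j < (d # ds) ! j"
    by (auto simp: cyc_prod_def)
  then obtain x xs where zx: "z = x # xs" by (cases z) auto
  have "x < d" using z(2) zx by auto
  moreover have "xs \<in> cyc_prod ds" using z zx by (auto simp: cyc_prod_def)
  ultimately show "z \<in> {x # xs | x xs. x < d \<and> xs \<in> cyc_prod ds}" using zx by auto
next
  fix z assume "z \<in> {x # xs | x xs. x < d \<and> xs \<in> cyc_prod ds}"
  then obtain x xs where zx: "z = x # xs" "x < d" "xs \<in> cyc_prod ds" by auto
  then show "z \<in> cyc_prod (d # ds)"
    by (auto simp: cyc_prod_def less_Suc_eq_0_disj)
qed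

fun cyc_add :: "nat list \<Rightarrow> nat list \<Rightarrow> nat list \<Rightarrow> nat list" where
  "cyc_add [] xs ys = []"
| "cyc_add (d # ds) xs ys = ((hd xs + hd ys) mod d) # cyc_add ds (tl xs) (tl ys)"

lemma cyc_add_in_cyc_prod: "\<forall>d\<in>set ds. 0 < d \<Longrightarrow> cyc_add ds xs ys \<in> cyc_prod ds"
  by (induction ds arbitrary: xs ys) (auto simp: cyc_prod_Nil cyc_prod_Cons)

lemma cyc_prod_Cons_image: "cyc_prod (d # ds) = (\<lambda>(a, as). a # as) ` ({..<d} \<times> cyc_prod ds)"
  unfolding cyc_prod_Cons by auto

lemma card_cyc_prod: "card (cyc_prod ds) = prod_list ds"
proof (induction ds)
  case (Cons d ds)
  have "card (cyc_prod (d # ds)) = card ({..<d} \<times> cyc_prod ds)"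
    unfolding cyc_prod_Cons_image by (rule card_image) (auto simp: inj_on_def)
  then show ?case using Cons by (simp add: card_cartesian_product)
qed (simp add: cyc_prod_Nil)

lemma sum_cyc_prod_Cons:
  "(\<Sum>x\<in>cyc_prod (d # ds). f x) = (\<Sum>a<d. \<Sum>as\<in>cyc_prod ds. f (a # as))"
proof -
  have "(\<Sum>x\<in>cyc_prod (d # ds). f x) = (\<Sum>(a, as)\<in>{..<d} \<times> cyc_prod ds. f (a # as))"
    unfolding cyc_prod_Cons_image by (subst sum.reindex) (auto simp: inj_on_def case_prod_unfold)
  then show ?thesis by (simp add: sum.cartesian_product)
qed

text \<open>For a subgroup \<open>H\<close> and an element \<open>y\<close>, \<open>cyc_join G H y\<close> is the product \<open>H\<langle>y\<rangle>\<close>;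
  \<open>meets_trivially G g H\<close> says that \<open>\<langle>g\<rangle> \<inter> H = {1}\<close>.  The structure theorem is proved by
  writing a subgroup as \<open>H\<langle>g\<rangle>\<close> with \<open>H\<close> meeting \<open>\<langle>g\<rangle>\<close> trivially.\<close>
definition cyc_join :: "('a, 'b) monoid_scheme \<Rightarrow> 'a set \<Rightarrow> 'a \<Rightarrow> 'a set" where
  "cyc_join G H y = {h \<otimes>\<^bsub>G\<^esub> y [^]\<^bsub>G\<^esub> (r::nat) | h r. h \<in> H}"

definition meets_trivially :: "('a, 'b) monoid_scheme \<Rightarrow> 'a \<Rightarrow> 'a set \<Rightarrow> bool" where
  "meets_trivially G g H \<longleftrightarrow> (\<forall>a::nat. g [^]\<^bsub>G\<^esub> a \<in> H \<longrightarrow> g [^]\<^bsub>G\<^esub> a = \<one>\<^bsub>G\<^esub>)"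

context comm_group
begin

lemma subgroup_nat_pow_closed: "subgroup S G \<Longrightarrow> x \<in> S \<Longrightarrow> x [^] (n::nat) \<in> S"
  by (induction n) (auto intro: subgroup.one_closed subgroup.m_closed)

lemma pow_mod_ord:
  assumes x: "x \<in> carrier G" shows "x [^] (a mod ord x) = x [^] (a::nat)"
proof -
  have "x [^] a = x [^] (ord x * (a div ord x)) \<otimes> x [^] (a mod ord x)"
    using x by (simp add: nat_pow_mult)
  then show ?thesis using x by (simp add: pow_eq_id)
qed

lemma inv_nat_pow_eq:
  assumes fin: "finite (carrier G)" and x: "x \<in> carrier G"
  shows "inv (x [^] (r::nat)) = x [^] (r * (ord x - 1))"
proof (rule inv_equality)
  have "r * (ord x - 1) + r = r * ord x"
    using ord_ge_1[OF fin x] by (simp add: algebra_simps)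
  then show "x [^] (r * (ord x - 1)) \<otimes> x [^] r = \<one>"
    using x by (simp add: nat_pow_mult pow_eq_id)
qed (use x in auto)

lemma ord_mult_coprime:
  assumes x: "x \<in> carrier G" and y: "y \<in> carrier G" and c: "coprime (ord x) (ord y)"
  shows "ord (x \<otimes> y) = ord x * ord y"
proof (rule dvd_antisym)
  show "ord (x \<otimes> y) dvd ord x * ord y" using abelian_ord_mul_divides x y by blast
  define N where "N = ord (x \<otimes> y)"
  have e: "x [^] N \<otimes> y [^] N = \<one>"
    using nat_pow_distrib[OF x y, of N] x y by (simp add: N_def)
  have "(x [^] N \<otimes> y [^] N) [^] ord y = \<one>" using e by simp
  moreover have "y [^] (N * ord y) = \<one>" using y by (simp add: pow_eq_id)
  ultimately have "x [^] (N * ord y) = \<one>"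
    using x y by (simp add: nat_pow_distrib nat_pow_pow)
  then have dx: "ord x dvd N" using c x pow_eq_id coprime_dvd_mult_left_iff by blast
  have "(x [^] N \<otimes> y [^] N) [^] ord x = \<one>" using e by simp
  moreover have "x [^] (N * ord x) = \<one>" using x by (simp add: pow_eq_id)
  ultimately have "y [^] (N * ord x) = \<one>"
    using x y by (simp add: nat_pow_distrib nat_pow_pow)
  then have dy: "ord y dvd N"
    using c y pow_eq_id coprime_dvd_mult_left_iff coprime_commute by blast
  show "ord x * ord y dvd N" using divides_mult[OF dx dy c] .
qed

lemma ord_lcm_element:
  assumes fin: "finite (carrier G)" and S: "subgroup S G" and x: "x \<in> S" and g: "g \<in> S"
  shows "\<exists>z\<in>S. ord z = lcm (ord x) (ord g)"
proof -
  have xc: "x \<in> carrier G" and gc: "g \<in> carrier G" using x g subgroup.subset[OF S] by auto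
  obtain a' b' where ab: "a' dvd ord x" "b' dvd ord g" "coprime a' b'" "a' * b' = lcm (ord x) (ord g)"
    using lcm_coprime_split[of "ord x" "ord g"] ord_ge_1[OF fin xc] ord_ge_1[OF fin gc] by auto
  obtain ka kb where ka: "ord x = a' * ka" and kb: "ord g = b' * kb"
    using ab(1,2) by (auto elim!: dvdE)
  have ka0: "ka \<noteq> 0" and kb0: "kb \<noteq> 0"
    using ka kb ord_ge_1[OF fin xc] ord_ge_1[OF fin gc] by auto
  have ou: "ord (x [^] ka) = a'" using ord_pow[OF xc _ ka0] ka ka0 by simp
  have ov: "ord (g [^] kb) = b'" using ord_pow[OF gc _ kb0] kb kb0 by simp
  have "ord (x [^] ka \<otimes> g [^] kb) = lcm (ord x) (ord g)"
    using ord_mult_coprime[of "x [^] ka" "g [^] kb"] xc gc ou ov ab(3,4) by simp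
  moreover have "x [^] ka \<otimes> g [^] kb \<in> S"
    using S x g by (simp add: subgroup.m_closed subgroup_nat_pow_closed)
  ultimately show ?thesis by blast
qed

text \<open>Every subgroup of a finite abelian group contains an element whose order is
  divisible by the orders of all its elements (namely one of maximal order).\<close>
lemma max_ord_element:
  assumes fin: "finite (carrier G)" and S: "subgroup S G"
  shows "\<exists>g\<in>S. \<forall>x\<in>S. ord x dvd ord g"
proof -
  have finS: "finite S" using fin subgroup.subset[OF S] finite_subset by blast
  have "ord ` S \<noteq> {}" using subgroup.one_closed[OF S] by blast
  then obtain g where g: "g \<in> S" "ord g = Max (ord ` S)"
    using Max_in[OF finite_imageI[OF finS]] by (metis imageE)
  have "ord x dvd ord g" if x: "x \<in> S" for x
  proof -
    obtain z where z: "z \<in> S" "ord z = lcm (ord x) (ord g)"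
      using ord_lcm_element[OF fin S x g(1)] by blast
    have "ord z \<le> ord g" using z(1) g(2) finS by simp
    moreover have "0 < lcm (ord x) (ord g)"
      using ord_ge_1[OF fin] x g(1) subgroup.subset[OF S] by (intro lcm_pos_nat) (auto simp: Suc_le_eq)
    then have "ord g \<le> lcm (ord x) (ord g)" by (simp add: dvd_imp_le)
    ultimately have "lcm (ord x) (ord g) = ord g" using z(2) by simp
    then show ?thesis using dvd_lcm1[of "ord x" "ord g"] by simp
  qed
  with g(1) show ?thesis by blast
qed

lemma cyc_join_memI: "h \<in> H \<Longrightarrow> h \<otimes> y [^] (r::nat) \<in> cyc_join G H y"
  unfolding cyc_join_def by blast

lemma subset_cyc_join: "subgroup H G \<Longrightarrow> y \<in> carrier G \<Longrightarrow> H \<subseteq> cyc_join G H y"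
  using cyc_join_memI[of _ H y 0] subgroup.subset by fastforce

lemma pow_in_cyc_join: "subgroup H G \<Longrightarrow> y \<in> carrier G \<Longrightarrow> y [^] (r::nat) \<in> cyc_join G H y"
  using cyc_join_memI[of "\<one>" H y r] subgroup.one_closed[of H G] by simp

lemma cyc_join_subset:
  "subgroup S G \<Longrightarrow> H \<subseteq> S \<Longrightarrow> y \<in> S \<Longrightarrow> cyc_join G H y \<subseteq> S"
  unfolding cyc_join_def by (auto intro: subgroup.m_closed subgroup_nat_pow_closed)

lemma cyc_join_subgroup:
  assumes fin: "finite (carrier G)" and H: "subgroup H G" and y: "y \<in> carrier G"
  shows "subgroup (cyc_join G H y) G"
proof (rule subgroupI)
  have Hc: "H \<subseteq> carrier G" using H subgroup.subset by blast
  show "cyc_join G H y \<subseteq> carrier G" unfolding cyc_join_def using Hc y by auto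
  show "cyc_join G H y \<noteq> {}" using pow_in_cyc_join[OF H y] by blast
  fix z w assume z: "z \<in> cyc_join G H y" and w: "w \<in> cyc_join G H y"
  obtain h r where hr: "z = h \<otimes> y [^] (r::nat)" "h \<in> H" using z unfolding cyc_join_def by blast
  obtain h' r' where hr': "w = h' \<otimes> y [^] (r'::nat)" "h' \<in> H" using w unfolding cyc_join_def by blast
  have hc: "h \<in> carrier G" "h' \<in> carrier G" using hr(2) hr'(2) Hc by auto
  have "inv z = inv h \<otimes> y [^] (r * (ord y - 1))"
    using hr hc y inv_nat_pow_eq[OF fin y] by (simp add: inv_mult)
  then show "inv z \<in> cyc_join G H y"
    using cyc_join_memI[OF subgroup.m_inv_closed[OF H hr(2)]] by simp
  have "z \<otimes> w = (h \<otimes> h') \<otimes> y [^] (r + r')"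
    using hr hr' hc y by (simp add: nat_pow_mult[symmetric] m_ac)
  then show "z \<otimes> w \<in> cyc_join G H y"
    using cyc_join_memI[OF subgroup.m_closed[OF H hr(2) hr'(2)]] by simp
qed

lemma prime_root_outside:
  assumes fin: "finite (carrier G)" and K: "subgroup K G" and x: "x \<in> carrier G" "x \<notin> K"
  shows "\<exists>(p::nat) (k::nat). prime p \<and> x [^] k \<notin> K \<and> (x [^] k) [^] p \<in> K"
proof -
  have ex: "\<exists>k. 0 < k \<and> x [^] (k::nat) \<in> K"
    using ord_ge_1[OF fin x(1)] x(1) subgroup.one_closed[OF K] by (intro exI[of _ "ord x"]) simp
  define k where "k = (LEAST k. 0 < k \<and> x [^] (k::nat) \<in> K)"
  have k: "0 < k" "x [^] k \<in> K" using LeastI_ex[OF ex] unfolding k_def by auto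
  have kmin: "x [^] j \<notin> K" if "0 < j" "j < k" for j
    using not_less_Least that unfolding k_def by blast
  have "k \<noteq> 1" using k x by auto
  then obtain p where p: "prime p" "p dvd k" using prime_factor_nat by blast
  then obtain j where j: "k = p * j" by (auto elim: dvdE)
  have "0 < j" "j < k" using j k(1) prime_gt_1_nat[OF p(1)] by (auto simp: gr0I)
  then have "x [^] j \<notin> K" using kmin by blast
  moreover have "(x [^] j) [^] p \<in> K" using k(2) j x(1) by (simp add: nat_pow_pow mult.commute)
  ultimately show ?thesis using p(1) by blast
qed

lemma prime_dvd_ord_of_root:
  assumes K: "subgroup K G" and p: "prime (p::nat)" and x: "x \<in> carrier G" "x \<notin> K" "x [^] p \<in> K"
  shows "p dvd ord x"
proof (rule ccontr)
  assume "\<not> p dvd ord x"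
  then have "coprime p (ord x)" using prime_imp_coprime p by blast
  then obtain s t where st: "p * s = ord x * t + 1"
    using bezout_nat[of p "ord x"] prime_gt_0_nat[OF p] by auto
  have "(x [^] p) [^] s = x"
    using x(1) by (simp add: st nat_pow_pow nat_pow_mult[symmetric] pow_eq_id)
  then have "x \<in> K" using subgroup_nat_pow_closed[OF K x(3)] by metis
  with x(2) show False by blast
qed

lemma meets_trivially_cyc_join:
  assumes fin: "finite (carrier G)" and H: "subgroup H G" and triv: "meets_trivially G g H"
    and g: "g \<in> carrier G" and p: "prime (p::nat)" and y: "y \<in> carrier G"
    and yp: "y [^] p \<in> H" and yK: "y \<notin> cyc_join G H g"
  shows "meets_trivially G g (cyc_join G H y)"
  unfolding meets_trivially_def
proof (intro allI impI)
  fix a :: nat assume "g [^] a \<in> cyc_join G H y"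
  then obtain h r where hr: "g [^] a = h \<otimes> y [^] (r::nat)" "h \<in> H"
    unfolding cyc_join_def by blast
  have hc: "h \<in> carrier G" using hr(2) H subgroup.subset by blast
  have K: "subgroup (cyc_join G H g) G" using cyc_join_subgroup[OF fin H g] .
  show "g [^] a = \<one>"
  proof (cases "p dvd r")
    case True
    then obtain r' where "r = p * r'" by (auto elim: dvdE)
    then have "y [^] r \<in> H" using subgroup_nat_pow_closed[OF H yp] y by (simp add: nat_pow_pow)
    then have "g [^] a \<in> H" using hr subgroup.m_closed[OF H] by simp
    then show ?thesis using triv unfolding meets_trivially_def by blast
  next
    case False
    then have "coprime r p" using p prime_imp_coprime coprime_commute by blast
    moreover have "r \<noteq> 0" using False by (metis dvd_0_right)
    ultimately obtain u v where uv: "r * u = p * v + 1"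
      using bezout_nat[of r p] by auto
    have "y [^] r = inv h \<otimes> g [^] a"
      using hr hc y g by (simp add: m_assoc[symmetric])
    then have "y [^] r \<in> cyc_join G H g"
      using subgroup.m_closed[OF K subsetD[OF subset_cyc_join[OF H g] subgroup.m_inv_closed[OF H hr(2)]]
          pow_in_cyc_join[OF H g]] by simp
    then have "(y [^] r) [^] u \<in> cyc_join G H g" using subgroup_nat_pow_closed[OF K] by blast
    moreover have "(y [^] r) [^] u = (y [^] p) [^] v \<otimes> y"
      using y uv by (simp add: nat_pow_pow nat_pow_mult[symmetric])
    ultimately have yv: "(y [^] p) [^] v \<otimes> y \<in> cyc_join G H g" by simp
    have "(y [^] p) [^] v \<in> cyc_join G H g"
      using subset_cyc_join[OF H g] subgroup_nat_pow_closed[OF H yp] by blast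
    then have "inv ((y [^] p) [^] v) \<otimes> ((y [^] p) [^] v \<otimes> y) \<in> cyc_join G H g"
      by (rule subgroup.m_closed[OF K subgroup.m_inv_closed[OF K] yv])
    then have "y \<in> cyc_join G H g" using y by (simp add: m_assoc[symmetric])
    with yK show ?thesis by blast
  qed
qed

lemma root_adjustment:
  assumes fin: "finite (carrier G)" and H: "subgroup H G" and triv: "meets_trivially G g H"
    and g: "g \<in> carrier G" and p: "prime (p::nat)" and x: "x \<in> carrier G"
    and xK: "x \<notin> cyc_join G H g" and xp: "x [^] p \<in> cyc_join G H g" and xg: "ord x dvd ord g"
  shows "\<exists>t::nat. x \<otimes> inv (g [^] t) \<notin> cyc_join G H g \<and> (x \<otimes> inv (g [^] t)) [^] p \<in> H"
proof -
  have K: "subgroup (cyc_join G H g) G" using cyc_join_subgroup[OF fin H g] .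
  have "p dvd ord g" using prime_dvd_ord_of_root[OF K p x xK xp] xg dvd_trans by blast
  then obtain q where q: "ord g = p * q" by (auto elim: dvdE)
  have q0: "0 < q" using q ord_ge_1[OF fin g] by (cases q) auto
  obtain h t where ht: "x [^] p = h \<otimes> g [^] (t::nat)" "h \<in> H"
    using xp unfolding cyc_join_def by blast
  have hc: "h \<in> carrier G" using ht(2) H subgroup.subset by blast
  have "h [^] q \<otimes> g [^] (t * q) = (x [^] p) [^] q"
    using ht(1) g hc by (simp add: nat_pow_distrib nat_pow_pow)
  also have "\<dots> = x [^] ord g" using x q by (simp add: nat_pow_pow)
  also have "\<dots> = \<one>" using xg x pow_eq_id by blast
  finally have "h [^] q \<otimes> g [^] (t * q) = \<one>" .
  then have "g [^] (t * q) = inv (h [^] q)"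
    using g hc by (simp add: inv_equality[symmetric] m_comm)
  then have "g [^] (t * q) = \<one>"
    using triv subgroup.m_inv_closed[OF H subgroup_nat_pow_closed[OF H ht(2)]]
    unfolding meets_trivially_def by metis
  then have "p * q dvd t * q" using g pow_eq_id q by simp
  then obtain t' where t': "t = p * t'" using q0 by (auto elim: dvdE)
  define y where "y = x \<otimes> inv (g [^] t')"
  have "y [^] p = x [^] p \<otimes> inv (g [^] t)"
    unfolding y_def using x g t' by (simp add: nat_pow_distrib nat_pow_inv[symmetric] nat_pow_pow mult.commute)
  then have "y [^] p = h" using ht(1) g hc by (simp add: m_assoc)
  moreover have "y \<notin> cyc_join G H g"
  proof
    assume "y \<in> cyc_join G H g"
    then have "y \<otimes> g [^] t' \<in> cyc_join G H g"
      using subgroup.m_closed[OF K _ pow_in_cyc_join[OF H g]] by blast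
    then show False using xK x g unfolding y_def by (simp add: m_assoc)
  qed
  ultimately show ?thesis using ht(2) unfolding y_def by blast
qed

text \<open>We take \<open>H\<close> of maximal size among
  the subgroups of \<open>S\<close> meeting \<open>\<langle>g\<rangle>\<close> trivially; if \<open>H\<langle>g\<rangle>\<close> missed an element of \<open>S\<close>, the
  lemmas above would produce a strictly larger such subgroup.\<close>
lemma cyclic_complement:
  assumes fin: "finite (carrier G)" and S: "subgroup S G" and g: "g \<in> S"
    and maxo: "\<forall>x\<in>S. ord x dvd ord g"
  shows "\<exists>H. subgroup H G \<and> H \<subseteq> S \<and> meets_trivially G g H \<and> S \<subseteq> cyc_join G H g"
proof -
  have gc: "g \<in> carrier G" using g S subgroup.subset by blast
  define F where "F = {H. subgroup H G \<and> H \<subseteq> S \<and> meets_trivially G g H}"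
  have "{\<one>} \<in> F"
    unfolding F_def meets_trivially_def using triv_subgroup subgroup.one_closed[OF S] by auto
  then have ne: "card ` F \<noteq> {}" by blast
  have "F \<subseteq> Pow (carrier G)" unfolding F_def using subgroup.subset by blast
  then have finF: "finite F" using fin finite_subset by blast
  obtain H where H: "H \<in> F" "card H = Max (card ` F)"
    using Max_in[OF finite_imageI[OF finF] ne] by auto
  have Hmax: "card H' \<le> card H" if "H' \<in> F" for H'
    using Max_ge[OF finite_imageI[OF finF] imageI[OF that, of card]] H(2) by simp
  have Hs: "subgroup H G" and HS: "H \<subseteq> S" and triv: "meets_trivially G g H"
    using H(1) unfolding F_def by auto
  have "x \<in> cyc_join G H g" if xS: "x \<in> S" for x
  proof (rule ccontr)
    assume xK: "x \<notin> cyc_join G H g"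
    have xc: "x \<in> carrier G" using xS S subgroup.subset by blast
    obtain p k where p: "prime (p::nat)" and x1K: "x [^] (k::nat) \<notin> cyc_join G H g"
      and x1p: "(x [^] k) [^] p \<in> cyc_join G H g"
      using prime_root_outside[OF fin cyc_join_subgroup[OF fin Hs gc] xc xK] by blast
    have x1S: "x [^] k \<in> S" using subgroup_nat_pow_closed[OF S xS] .
    obtain t where yK: "x [^] k \<otimes> inv (g [^] (t::nat)) \<notin> cyc_join G H g"
      and yp: "(x [^] k \<otimes> inv (g [^] t)) [^] p \<in> H"
      using root_adjustment[OF fin Hs triv gc p _ x1K x1p] xc maxo x1S by auto
    define y where "y = x [^] k \<otimes> inv (g [^] t)"
    have yS: "y \<in> S" unfolding y_def
      using S x1S g by (simp add: subgroup.m_closed subgroup.m_inv_closed subgroup_nat_pow_closed)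
    have yc: "y \<in> carrier G" using yS S subgroup.subset by blast
    have "cyc_join G H y \<in> F"
      unfolding F_def using cyc_join_subgroup[OF fin Hs yc] cyc_join_subset[OF S HS yS]
        meets_trivially_cyc_join[OF fin Hs triv gc p yc] yp yK y_def by simp
    moreover have "H \<subset> cyc_join G H y"
      using subset_cyc_join[OF Hs yc] pow_in_cyc_join[OF Hs yc, of 1] subset_cyc_join[OF Hs gc]
        yK yc y_def by auto
    moreover have "finite (cyc_join G H y)"
      using cyc_join_subgroup[OF fin Hs yc] fin finite_subset subgroup.subset by blast
    ultimately show False using Hmax psubset_card_mono by (meson leD)
  qed
  with Hs HS triv show ?thesis by blast
qed

lemma cyclic_factor_unique:
  assumes H: "subgroup H G" and triv: "meets_trivially G g H" and g: "g \<in> carrier G"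
    and ab: "a < ord g" "b < ord g" and h: "h \<in> H" "h' \<in> H"
    and eq: "g [^] (a::nat) \<otimes> h = g [^] (b::nat) \<otimes> h'"
  shows "a = b \<and> h = h'"
proof -
  have key: "a' = b' \<and> k = k'"
    if le: "a' \<le> b'" and b': "b' < ord g" and k: "k \<in> H" "k' \<in> H"
      and e: "g [^] (a'::nat) \<otimes> k = g [^] (b'::nat) \<otimes> k'" for a' b' k k'
  proof -
    have kc: "k \<in> carrier G" "k' \<in> carrier G" using k H subgroup.subset by auto
    have "g [^] a' \<otimes> k = g [^] a' \<otimes> (g [^] (b' - a') \<otimes> k')"
      using e le g kc by (simp add: m_assoc[symmetric] nat_pow_mult)
    then have kk: "k = g [^] (b' - a') \<otimes> k'" using g kc by simp
    then have "g [^] (b' - a') = k \<otimes> inv k'" using g kc by (simp add: m_assoc)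
    moreover have "k \<otimes> inv k' \<in> H"
      using k by (simp add: subgroup.m_closed[OF H] subgroup.m_inv_closed[OF H])
    ultimately have "g [^] (b' - a') = \<one>" using triv unfolding meets_trivially_def by metis
    then have "ord g dvd b' - a'" using g pow_eq_id by blast
    moreover have "b' - a' < ord g" using b' by linarith
    ultimately have "b' - a' = 0" using dvd_imp_le not_le by blast
    then show ?thesis using le kk g kc by simp
  qed
  show ?thesis
  proof (cases "a \<le> b")
    case True then show ?thesis using key[of a b h h'] ab h eq by blast
  next
    case False then show ?thesis using key[of b a h' h] ab h eq by auto
  qed
qed

end

fun eval_gens :: "('a, 'b) monoid_scheme \<Rightarrow> 'a list \<Rightarrow> nat list \<Rightarrow> 'a" where
  "eval_gens G [] xs = \<one>\<^bsub>G\<^esub>"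
| "eval_gens G (g # gs) xs = g [^]\<^bsub>G\<^esub> hd xs \<otimes>\<^bsub>G\<^esub> eval_gens G gs (tl xs)"

context comm_group
begin

lemma eval_gens_closed: "subgroup S G \<Longrightarrow> set gs \<subseteq> S \<Longrightarrow> eval_gens G gs xs \<in> S"
  by (induction gs arbitrary: xs)
    (auto intro: subgroup.one_closed subgroup.m_closed subgroup_nat_pow_closed)

lemma eval_gens_add:
  "set gs \<subseteq> carrier G \<Longrightarrow>
   eval_gens G gs (cyc_add (map ord gs) xs ys) = eval_gens G gs xs \<otimes> eval_gens G gs ys"
proof (induction gs arbitrary: xs ys)
  case (Cons g gs)
  have g: "g \<in> carrier G" and gs: "set gs \<subseteq> carrier G" using Cons.prems by auto
  have "g [^] ((hd xs + hd ys) mod ord g) = g [^] hd xs \<otimes> g [^] hd ys"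
    using g by (simp add: pow_mod_ord nat_pow_mult)
  moreover have "eval_gens G gs (tl xs) \<in> carrier G" "eval_gens G gs (tl ys) \<in> carrier G"
    using eval_gens_closed[OF subgroup_self gs] by auto
  ultimately show ?case using Cons.IH[OF gs] g by (simp add: m_ac)
qed simp

lemma eval_gens_Cons_bij:
  assumes fin: "finite (carrier G)" and H: "subgroup H G" and triv: "meets_trivially G g H"
    and g: "g \<in> carrier G" and bij: "bij_betw (eval_gens G gs) (cyc_prod (map ord gs)) H"
  shows "bij_betw (eval_gens G (g # gs)) (cyc_prod (map ord (g # gs))) (cyc_join G H g)"
  unfolding bij_betw_def
proof
  have ev: "eval_gens G gs as \<in> H" if "as \<in> cyc_prod (map ord gs)" for as
    using bij_betw_apply[OF bij that] .
  have Hc: "H \<subseteq> carrier G" using H subgroup.subset by blast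
  have cons: "\<exists>a as. u = a # as \<and> a < ord g \<and> as \<in> cyc_prod (map ord gs)"
    if "u \<in> cyc_prod (map ord (g # gs))" for u
    using that unfolding list.map cyc_prod_Cons by blast
  show "inj_on (eval_gens G (g # gs)) (cyc_prod (map ord (g # gs)))"
  proof (rule inj_onI)
    fix u w
    assume u': "u \<in> cyc_prod (map ord (g # gs))" and w': "w \<in> cyc_prod (map ord (g # gs))"
      and e: "eval_gens G (g # gs) u = eval_gens G (g # gs) w"
    obtain a as where u: "u = a # as" "a < ord g" "as \<in> cyc_prod (map ord gs)" using cons[OF u'] by blast
    obtain b bs where w: "w = b # bs" "b < ord g" "bs \<in> cyc_prod (map ord gs)" using cons[OF w'] by blast
    have "g [^] a \<otimes> eval_gens G gs as = g [^] b \<otimes> eval_gens G gs bs" using e u(1) w(1) by simp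
    then have "a = b \<and> eval_gens G gs as = eval_gens G gs bs"
      using cyclic_factor_unique[OF H triv g u(2) w(2) ev[OF u(3)] ev[OF w(3)]] by blast
    then have "a = b \<and> as = bs"
      using inj_onD[OF bij_betw_imp_inj_on[OF bij] _ u(3) w(3)] by blast
    then show "u = w" using u(1) w(1) by simp
  qed
  show "eval_gens G (g # gs) ` cyc_prod (map ord (g # gs)) = cyc_join G H g"
  proof (intro equalityI subsetI)
    fix z assume "z \<in> eval_gens G (g # gs) ` cyc_prod (map ord (g # gs))"
    then obtain u where u: "u \<in> cyc_prod (map ord (g # gs))" "z = eval_gens G (g # gs) u" by blast
    then obtain a as where "u = a # as" and as: "as \<in> cyc_prod (map ord gs)" using cons by blast
    then have z: "z = g [^] a \<otimes> eval_gens G gs as" using u(2) by simp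
    have h: "eval_gens G gs as \<in> H" using ev as .
    have "z = eval_gens G gs as \<otimes> g [^] a"
      unfolding z(1) using g subsetD[OF Hc h] by (rule m_comm[OF nat_pow_closed])
    then show "z \<in> cyc_join G H g" using cyc_join_memI[OF h] by simp
  next
    fix z assume "z \<in> cyc_join G H g"
    then obtain h r where z: "z = h \<otimes> g [^] (r::nat)" "h \<in> H" unfolding cyc_join_def by blast
    have "h \<in> eval_gens G gs ` cyc_prod (map ord gs)" using bij z(2) by (simp add: bij_betw_def)
    then obtain as where as: "as \<in> cyc_prod (map ord gs)" "h = eval_gens G gs as" by blast
    have "r mod ord g < ord g" using ord_ge_1[OF fin g] by simp
    then have "(r mod ord g) # as \<in> cyc_prod (map ord (g # gs))"
      using as(1) unfolding list.map cyc_prod_Cons by blast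
    moreover have "eval_gens G (g # gs) ((r mod ord g) # as) = g [^] r \<otimes> h"
      using as(2) g by (simp add: pow_mod_ord)
    moreover have "g [^] r \<otimes> h = z"
      unfolding z(1) using g subsetD[OF Hc z(2)] by (rule m_comm[OF nat_pow_closed])
    ultimately show "z \<in> eval_gens G (g # gs) ` cyc_prod (map ord (g # gs))" by (metis image_eqI)
  qed
qed

theorem finite_abelian_basis:
  assumes fin: "finite (carrier G)" and S: "subgroup S G"
  shows "\<exists>gs. set gs \<subseteq> S \<and> bij_betw (eval_gens G gs) (cyc_prod (map ord gs)) S"
  using S
proof (induction "card S" arbitrary: S rule: less_induct)
  case less
  have Sc: "S \<subseteq> carrier G" using less.prems subgroup.subset by blast
  show ?case
  proof (cases "S = {\<one>}")
    case True
    then show ?thesis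
      by (intro exI[of _ "[]"]) (simp add: cyc_prod_Nil bij_betw_def)
  next
    case False
    obtain g where g: "g \<in> S" and maxo: "\<forall>x\<in>S. ord x dvd ord g"
      using max_ord_element[OF fin less.prems] by blast
    have gc: "g \<in> carrier G" using g Sc by blast
    obtain H where H: "subgroup H G" and HS: "H \<subseteq> S" and triv: "meets_trivially G g H"
      and SK: "S \<subseteq> cyc_join G H g"
      using cyclic_complement[OF fin less.prems g maxo] by blast
    have "g \<noteq> \<one>"
    proof
      assume "g = \<one>"
      then have "\<forall>x\<in>S. ord x = 1" using maxo by simp
      then have "\<forall>x\<in>S. x = \<one>" using Sc ord_eq_1 by blast
      then show False using False subgroup.one_closed[OF less.prems] by blast
    qed
    moreover have "g [^] (1::nat) = g" using gc by simp
    ultimately have "g \<notin> H" using triv unfolding meets_trivially_def by metis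
    then have "H \<subset> S" using HS g by blast
    then have "card H < card S" using fin Sc finite_subset psubset_card_mono by blast
    then obtain gs where gs: "set gs \<subseteq> H" "bij_betw (eval_gens G gs) (cyc_prod (map ord gs)) H"
      using less.hyps[OF _ H] by blast
    have "cyc_join G H g = S" using SK cyc_join_subset[OF less.prems HS g] by blast
    then have "bij_betw (eval_gens G (g # gs)) (cyc_prod (map ord (g # gs))) S"
      using eval_gens_Cons_bij[OF fin H triv gc gs(2)] by (simp only:)
    moreover have "set (g # gs) \<subseteq> S" using gs(1) HS g by auto
    ultimately show ?thesis by blast
  qed
qed

end

definition unity_root :: "nat \<Rightarrow> nat \<Rightarrow> complex" where
  "unity_root d a = exp (2 * of_real pi * \<i> * of_nat a / of_nat d)"

lemma unity_root_add: "unity_root d (a + b) = unity_root d a * unity_root d b"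
  unfolding unity_root_def by (simp add: exp_add[symmetric] add_divide_distrib distrib_left)

lemma unity_root_mult: "unity_root d (j * a) = unity_root d a ^ j"
proof (induction j)
  case (Suc j)
  have "unity_root d (Suc j * a) = unity_root d a * unity_root d (j * a)"
    by (simp add: unity_root_add[symmetric])
  then show ?case using Suc by simp
qed (simp add: unity_root_def)

lemma unity_root_multiple: "0 < d \<Longrightarrow> unity_root d (d * q) = 1"
proof -
  assume d: "0 < d"
  have "2 * of_real pi * \<i> * of_nat (d * q) / of_nat d = of_nat q * (2 * of_real pi * \<i>)"
    using d by (simp add: field_simps)
  then show ?thesis unfolding unity_root_def by (simp add: exp_of_nat_mult)
qed

lemma unity_root_mod: "0 < d \<Longrightarrow> unity_root d (a mod d) = unity_root d a"
  using unity_root_add[of d "d * (a div d)" "a mod d"] unity_root_multiple[of d "a div d"] by simp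

lemma unity_root_cnj_mult: "cnj (unity_root d a) * unity_root d a = 1"
proof -
  have "norm (unity_root d a) = 1" unfolding unity_root_def by simp
  then show ?thesis using complex_norm_square[of "unity_root d a"] by (simp add: mult.commute)
qed

lemma unity_root_eq_1: "0 < d \<Longrightarrow> unity_root d c = 1 \<Longrightarrow> d dvd c"
proof -
  assume d: "0 < d" and e: "unity_root d c = 1"
  have "unity_root d c = cis (2 * pi * real c / real d)"
    unfolding unity_root_def cis_conv_exp by (simp add: mult_ac)
  then have "cos (2 * pi * real c / real d) = 1" using e by (metis cis.simps(1) one_complex.simps(1))
  then obtain k :: int where "2 * pi * real c / real d = real_of_int k * 2 * pi"
    using cos_one_2pi_int by blast
  then have "real c = real_of_int k * real d" using d by (simp add: field_simps)
  then have "int c = k * int d" by (metis of_int_eq_iff of_int_mult of_int_of_nat_eq)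
  then have "int d dvd int c" by simp
  then show ?thesis by simp
qed

lemma unity_root_inj:
  assumes d: "0 < d" and a: "a < d" and b: "b < d" and e: "unity_root d a = unity_root d b"
  shows "a = b"
proof -
  have le_case: "x = y" if "x \<le> y" "y < d" "unity_root d x = unity_root d y" for x y
  proof -
    have "unity_root d x * unity_root d (y - x) = unity_root d (x + (y - x))"
      by (simp only: unity_root_add)
    also have "\<dots> = unity_root d x" using that(1,3) by simp
    finally have "unity_root d x * unity_root d (y - x) = unity_root d x" .
    moreover have "unity_root d x \<noteq> 0" using unity_root_cnj_mult[of d x] by auto
    ultimately have "unity_root d (y - x) = 1" by simp
    then have "d dvd y - x" using unity_root_eq_1[OF d] by blast
    moreover have "y - x < d" using that by linarith
    ultimately show "x = y" using that(1) dvd_imp_le by fastforce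
  qed
  show ?thesis
  proof (cases "a \<le> b")
    case True
    show ?thesis by (rule le_case[OF True b e])
  next
    case False
    then show ?thesis using le_case[of b a] a e by simp
  qed
qed

lemma unity_root_orth:
  assumes d: "0 < d" and a: "a < d" and b: "b < d"
  shows "(\<Sum>c<d. cnj (unity_root d (c * a)) * unity_root d (c * b)) = (if a = b then of_nat d else 0)"
proof -
  define w where "w = cnj (unity_root d a) * unity_root d b"
  have terms: "cnj (unity_root d (c * a)) * unity_root d (c * b) = w ^ c" for c
    unfolding w_def unity_root_mult by (simp add: power_mult_distrib)
  show ?thesis
  proof (cases "a = b")
    case True
    then show ?thesis using terms unity_root_cnj_mult[of d b] by (simp add: w_def)
  next
    case False
    have "w \<noteq> 1"
    proof
      assume "w = 1"
      have "unity_root d b = (cnj (unity_root d a) * unity_root d a) * unity_root d b"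
        using unity_root_cnj_mult[of d a] by simp
      also have "\<dots> = unity_root d a * w" unfolding w_def by (simp add: ac_simps)
      finally have "unity_root d b = unity_root d a" using \<open>w = 1\<close> by simp
      then show False using unity_root_inj[OF d b a] False by simp
    qed
    moreover have "w ^ d = 1"
      using terms[of d] unity_root_multiple[OF d, of a] unity_root_multiple[OF d, of b]
      by (simp add: mult.commute)
    ultimately show ?thesis using False terms sum_gp_strict[of w d] by simp
  qed
qed

lemma fchar_Nil: "fchar [] as bs = 1"
  unfolding fchar_def by simp

lemma fchar_Cons: "fchar (d # ds) (a # as) (b # bs) = unity_root d (a * b) * fchar ds as bs"
  unfolding fchar_def unity_root_def length_Cons sum.lessThan_Suc_shift
  by (simp add: exp_add mult.assoc)

lemma fchar_orth:
  "\<forall>d\<in>set ds. 0 < d \<Longrightarrow> x \<in> cyc_prod ds \<Longrightarrow> y \<in> cyc_prod ds \<Longrightarrow>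
   (\<Sum>j\<in>cyc_prod ds. cnj (fchar ds j x) * fchar ds j y) = (if x = y then of_nat (prod_list ds) else 0)"
proof (induction ds arbitrary: x y)
  case (Cons d ds)
  obtain a as where x: "x = a # as" "a < d" "as \<in> cyc_prod ds"
    using Cons.prems(2) unfolding cyc_prod_Cons by blast
  obtain b bs where y: "y = b # bs" "b < d" "bs \<in> cyc_prod ds"
    using Cons.prems(3) unfolding cyc_prod_Cons by blast
  have d: "0 < d" using Cons.prems(1) by simp
  have "(\<Sum>j\<in>cyc_prod (d # ds). cnj (fchar (d # ds) j x) * fchar (d # ds) j y)
      = (\<Sum>c<d. cnj (unity_root d (c * a)) * unity_root d (c * b))
        * (\<Sum>cs\<in>cyc_prod ds. cnj (fchar ds cs as) * fchar ds cs bs)"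
    unfolding sum_cyc_prod_Cons x(1) y(1) fchar_Cons sum_product by (simp add: mult_ac)
  then show ?case using Cons.IH[OF _ x(3) y(3)] Cons.prems(1) unity_root_orth[OF d x(2) y(2)] x y by auto
qed (simp add: cyc_prod_Nil fchar_Nil)

lemma fchar_add:
  "\<forall>d\<in>set ds. 0 < d \<Longrightarrow> x \<in> cyc_prod ds \<Longrightarrow> y \<in> cyc_prod ds \<Longrightarrow> j \<in> cyc_prod ds \<Longrightarrow>
   fchar ds j x * fchar ds j y = fchar ds j (cyc_add ds x y)"
proof (induction ds arbitrary: x y j)
  case (Cons d ds)
  obtain a as where x: "x = a # as" "as \<in> cyc_prod ds"
    using Cons.prems(2) unfolding cyc_prod_Cons by blast
  obtain b bs where y: "y = b # bs" "bs \<in> cyc_prod ds"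
    using Cons.prems(3) unfolding cyc_prod_Cons by blast
  obtain c cs where j: "j = c # cs" "cs \<in> cyc_prod ds"
    using Cons.prems(4) unfolding cyc_prod_Cons by blast
  have d: "0 < d" using Cons.prems(1) by simp
  have "unity_root d (c * a) * unity_root d (c * b) = unity_root d (c * (a + b))"
    by (simp add: unity_root_add[symmetric] algebra_simps)
  also have "\<dots> = unity_root d (c * ((a + b) mod d))"
    by (metis unity_root_mod[OF d] mod_mult_right_eq)
  finally show ?case using Cons x y j by (simp add: fchar_Cons mult_ac)
qed (simp add: fchar_Nil)

lemma rowprod_pair: "rowprod c {#a, b#} = (\<lambda>t. c a t * c b t)"
  unfolding rowprod_def by (simp add: mult.commute)

lemma fourier_pair_orth:
  assumes ds: "\<forall>d\<in>set ds. 0 < d"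
    and xyuv: "x \<in> cyc_prod ds" "y \<in> cyc_prod ds" "u \<in> cyc_prod ds" "v \<in> cyc_prod ds"
  shows "cinner (cyc_prod ds) (rowprod (fourier ds) {#x, y#}) (rowprod (fourier ds) {#u, v#}) = 0
         \<longleftrightarrow> cyc_add ds x y \<noteq> cyc_add ds u v"
proof -
  have "cinner (cyc_prod ds) (rowprod (fourier ds) {#x, y#}) (rowprod (fourier ds) {#u, v#})
      = (\<Sum>t\<in>cyc_prod ds. cnj (fchar ds t (cyc_add ds x y)) * fchar ds t (cyc_add ds u v))"
    unfolding cinner_def rowprod_pair fourier_def
    by (rule sum.cong) (simp_all add: fchar_add[OF ds] xyuv)
  also have "\<dots> = (if cyc_add ds x y = cyc_add ds u v then of_nat (prod_list ds) else 0)"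
    using fchar_orth[OF ds cyc_add_in_cyc_prod[OF ds] cyc_add_in_cyc_prod[OF ds]] .
  moreover have "prod_list ds \<noteq> 0" using ds by (auto simp: prod_list_zero_iff)
  ultimately show ?thesis by simp
qed

lemma size_2_mset:
  assumes "size M = 2" obtains a b where "M = {#a, b#}"
proof -
  obtain a N where "M = add_mset a N" using size_eq_Suc_imp_eq_union[of M 1] assms by auto
  moreover obtain b where "N = {#b#}"
    using assms calculation size_1_singleton_mset[of N] by auto
  ultimately show ?thesis using that by blast
qed

lemma image_mset_inverse: "\<forall>x\<in>#M. g (f x) = x \<Longrightarrow> image_mset g (image_mset f M) = M"
  by (induction M) auto

lemma Lgraph_iso_by_pairs:
  assumes bij: "bij_betw \<phi> I J"
    and pairs: "\<And>i j k l. i \<in> I \<Longrightarrow> j \<in> I \<Longrightarrow> k \<in> I \<Longrightarrow> l \<in> I \<Longrightarrow>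
      cinner T (rowprod c {#i, j#}) (rowprod c {#k, l#}) = 0 \<longleftrightarrow>
      cinner S (rowprod d {#\<phi> i, \<phi> j#}) (rowprod d {#\<phi> k, \<phi> l#}) = 0"
  shows "Lgraph_iso I T c J S d (image_mset \<phi>)"
proof -
  define \<psi> where "\<psi> = the_inv_into I \<phi>"
  have \<psi>\<phi>: "\<psi> (\<phi> i) = i" if "i \<in> I" for i
    unfolding \<psi>_def using the_inv_into_f_f[OF bij_betw_imp_inj_on[OF bij] that] .
  have \<phi>\<psi>: "\<phi> (\<psi> j) = j" if "j \<in> J" for j
    unfolding \<psi>_def using f_the_inv_into_f_bij_betw[OF bij that] .
  have \<psi>J: "\<psi> j \<in> I" if "j \<in> J" for j
    unfolding \<psi>_def using bij_betw_apply[OF bij_betw_the_inv_into[OF bij] that] .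
  have bij_verts: "bij_betw (image_mset \<phi>) (Lverts I) (Lverts J)"
  proof (rule bij_betw_byWitness[where f' = "image_mset \<psi>"])
    show "\<forall>M\<in>Lverts I. image_mset \<psi> (image_mset \<phi> M) = M"
      using \<psi>\<phi> unfolding Lverts_def by (auto intro!: image_mset_inverse)
    show "\<forall>M\<in>Lverts J. image_mset \<phi> (image_mset \<psi> M) = M"
      using \<phi>\<psi> unfolding Lverts_def by (auto intro!: image_mset_inverse)
    show "image_mset \<phi> ` Lverts I \<subseteq> Lverts J"
      using bij_betw_apply[OF bij] unfolding Lverts_def by (auto simp: subset_iff)
    show "image_mset \<psi> ` Lverts J \<subseteq> Lverts I"
      using \<psi>J unfolding Lverts_def by (auto simp: subset_iff)
  qed
  have adj: "Ladj T c M N \<longleftrightarrow> Ladj S d (image_mset \<phi> M) (image_mset \<phi> N)"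
    if M: "M \<in> Lverts I" and N: "N \<in> Lverts I" for M N
  proof -
    obtain i j where ij: "M = {#i, j#}" using M size_2_mset unfolding Lverts_def by blast
    obtain k l where kl: "N = {#k, l#}" using N size_2_mset unfolding Lverts_def by blast
    have "i \<in> I" "j \<in> I" "k \<in> I" "l \<in> I" using M N ij kl unfolding Lverts_def by auto
    moreover have "M \<noteq> N \<longleftrightarrow> image_mset \<phi> M \<noteq> image_mset \<phi> N"
      using inj_on_eq_iff[OF bij_betw_imp_inj_on[OF bij_verts] M N] by simp
    ultimately show ?thesis unfolding Ladj_def ij kl using pairs by simp
  qed
  show ?thesis unfolding Lgraph_iso_def using bij_verts adj by blast
qed

lemma cinner_commute: "cinner T x y = cnj (cinner T y x)"
  unfolding cinner_def by (simp add: mult.commute)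

locale hadamard =
  fixes n :: nat and H :: "nat \<Rightarrow> nat \<Rightarrow> complex"
  assumes n_pos: "0 < n"
    and unimodular: "\<forall>a<n. \<forall>t<n. norm (H a t) = 1"
    and rows_orth: "\<forall>a<n. \<forall>b<n. a \<noteq> b \<longrightarrow> cinner {..<n} (H a) (H b) = 0"
    and first_row: "\<forall>t<n. H 0 t = 1"
    and unique_support: "\<forall>a<n. \<forall>b<n. \<exists>!c. c < n \<and> cinner {..<n} (\<lambda>t. H a t * H b t) (H c) \<noteq> 0"
begin

lemma cnj_entry_mult: "a < n \<Longrightarrow> t < n \<Longrightarrow> cnj (H a t) * H a t = 1"
  using unimodular complex_norm_square[of "H a t"] by (simp add: mult.commute)

lemma entry_nonzero: "a < n \<Longrightarrow> t < n \<Longrightarrow> H a t \<noteq> 0"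
  using cnj_entry_mult by force

lemma inner_rows: "a < n \<Longrightarrow> b < n \<Longrightarrow> cinner {..<n} (H a) (H b) = (if a = b then of_nat n else 0)"
  using rows_orth cnj_entry_mult by (simp add: cinner_def)

text \<open>A square matrix with orthogonal rows also has orthogonal columns: \<open>H H\<^sup>* = n I\<close>
  implies \<open>H\<^sup>* H = n I\<close>.\<close>
lemma columns_orth:
  assumes s: "s < n" and t: "t < n"
  shows "(\<Sum>c<n. cnj (H c s) * H c t) = (if s = t then of_nat n else 0)"
proof -
  define A :: "complex mat" where "A = mat n n (\<lambda>(i, j). H i j)"
  define B :: "complex mat" where "B = mat n n (\<lambda>(i, j). cnj (H j i) / of_nat n)"
  have A: "A \<in> carrier_mat n n" and B: "B \<in> carrier_mat n n" unfolding A_def B_def by auto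
  have "A * B = 1\<^sub>m n"
  proof (rule eq_matI)
    fix i j assume "i < dim_row (1\<^sub>m n)" "j < dim_col (1\<^sub>m n)"
    then have ij: "i < n" "j < n" by auto
    have "(A * B) $$ (i, j) = cinner {..<n} (H j) (H i) / of_nat n"
      using ij unfolding A_def B_def cinner_def
      by (simp add: scalar_prod_def lessThan_atLeast0 sum_divide_distrib mult.commute)
    then show "(A * B) $$ (i, j) = 1\<^sub>m n $$ (i, j)"
      using ij inner_rows[of j i] n_pos by auto
  qed (auto simp: A_def B_def)
  then have BA: "B * A = 1\<^sub>m n" using mat_mult_left_right_inverse[OF A B] by blast
  have "(B * A) $$ (s, t) = (\<Sum>c<n. cnj (H c s) * H c t) / of_nat n"
    using s t unfolding A_def B_def by (simp add: scalar_prod_def lessThan_atLeast0 sum_divide_distrib)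
  then show ?thesis using BA s t n_pos by (auto split: if_splits)
qed

lemma row_expansion:
  assumes t: "t < n"
  shows "of_nat n * v t = (\<Sum>c<n. cinner {..<n} (H c) v * H c t)"
proof -
  have "(\<Sum>c<n. cinner {..<n} (H c) v * H c t) = (\<Sum>s<n. v s * (\<Sum>c<n. cnj (H c s) * H c t))"
    unfolding cinner_def sum_distrib_right sum_distrib_left
    by (subst sum.swap) (simp add: mult_ac)
  also have "\<dots> = (\<Sum>s<n. if s = t then v s * of_nat n else 0)"
    by (rule sum.cong) (simp_all add: columns_orth t)
  also have "\<dots> = of_nat n * v t" using t by (simp add: mult.commute)
  finally show ?thesis by simp
qed

definition mul :: "nat \<Rightarrow> nat \<Rightarrow> nat" where
  "mul a b = (THE c. c < n \<and> cinner {..<n} (\<lambda>t. H a t * H b t) (H c) \<noteq> 0)"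

lemma mul_props:
  assumes "a < n" "b < n"
  shows "mul a b < n" "cinner {..<n} (\<lambda>t. H a t * H b t) (H (mul a b)) \<noteq> 0"
    "\<And>c. c < n \<Longrightarrow> c \<noteq> mul a b \<Longrightarrow> cinner {..<n} (\<lambda>t. H a t * H b t) (H c) = 0"
proof -
  have u: "\<exists>!c. c < n \<and> cinner {..<n} (\<lambda>t. H a t * H b t) (H c) \<noteq> 0"
    using unique_support assms by blast
  then have m: "mul a b < n \<and> cinner {..<n} (\<lambda>t. H a t * H b t) (H (mul a b)) \<noteq> 0"
    unfolding mul_def by (rule theI')
  then show "mul a b < n" "cinner {..<n} (\<lambda>t. H a t * H b t) (H (mul a b)) \<noteq> 0" by auto
  show "cinner {..<n} (\<lambda>t. H a t * H b t) (H c) = 0" if "c < n" "c \<noteq> mul a b" for c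
    using u m that by blast
qed

lemma product_proportional:
  assumes a: "a < n" and b: "b < n"
  shows "\<exists>s. s \<noteq> 0 \<and> (\<forall>t<n. H a t * H b t = s * H (mul a b) t)"
proof -
  define v where "v = (\<lambda>t. H a t * H b t)"
  define m where "m = mul a b"
  have m: "m < n" using mul_props(1)[OF a b] m_def by simp
  have zero: "cinner {..<n} (H c) v = 0" if "c < n" "c \<noteq> m" for c
    using mul_props(3)[OF a b that(1)] that(2) cinner_commute[of "{..<n}" "H c" v] m_def v_def by simp
  have nonzero: "cinner {..<n} (H m) v \<noteq> 0"
    using mul_props(2)[OF a b] cinner_commute[of "{..<n}" "H m" v] m_def v_def by simp
  have "H a t * H b t = cinner {..<n} (H m) v / of_nat n * H m t" if t: "t < n" for t
  proof -
    have "of_nat n * v t = (\<Sum>c<n. if c = m then cinner {..<n} (H m) v * H m t else 0)"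
      unfolding row_expansion[OF t] by (rule sum.cong) (auto simp: zero)
    then show ?thesis using m n_pos unfolding v_def by (simp add: field_simps)
  qed
  then show ?thesis using nonzero n_pos m_def by (intro exI[of _ "cinner {..<n} (H m) v / of_nat n"]) auto
qed

lemma proportional_rows_eq:
  assumes c: "c < n" and c': "c' < n" and scaled: "\<forall>t<n. H c t = s * H c' t"
  shows "c = c'"
proof (rule ccontr)
  assume ne: "c \<noteq> c'"
  have "s \<noteq> 0" using scaled entry_nonzero[OF c n_pos] n_pos by auto
  have "cinner {..<n} (H c') (H c) = (\<Sum>t<n. s * (cnj (H c' t) * H c' t))"
    unfolding cinner_def by (rule sum.cong) (auto simp: scaled mult_ac)
  also have "\<dots> = s * of_nat n" using cnj_entry_mult[OF c'] by simp
  finally show False using \<open>s \<noteq> 0\<close> n_pos rows_orth c c' ne by auto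
qed

text \<open>The group axioms for \<open>\<cdot>\<close>: each identity holds because both sides index rows that
  are proportional to the same product of rows.\<close>
lemma mul_closed: "a < n \<Longrightarrow> b < n \<Longrightarrow> mul a b < n"
  using mul_props(1) .

lemma mul_comm: "mul a b = mul b a"
  unfolding mul_def by (simp add: mult.commute)

lemma mul_0: assumes b: "b < n" shows "mul 0 b = b"
proof -
  obtain s where "\<forall>t<n. H 0 t * H b t = s * H (mul 0 b) t"
    using product_proportional[OF n_pos b] by blast
  then have "\<forall>t<n. H b t = s * H (mul 0 b) t" using first_row by simp
  then have "b = mul 0 b" by (rule proportional_rows_eq[OF b mul_closed[OF n_pos b]])
  then show ?thesis by simp
qed

lemma mul_assoc:
  assumes a: "a < n" and b: "b < n" and c: "c < n"
  shows "mul (mul a b) c = mul a (mul b c)"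
proof -
  have ab: "mul a b < n" and bc: "mul b c < n" using mul_closed a b c by auto
  obtain s1 where l1: "s1 \<noteq> 0" "\<forall>t<n. H a t * H b t = s1 * H (mul a b) t"
    using product_proportional[OF a b] by blast
  obtain s2 where l2: "s2 \<noteq> 0" "\<forall>t<n. H (mul a b) t * H c t = s2 * H (mul (mul a b) c) t"
    using product_proportional[OF ab c] by blast
  obtain s3 where l3: "\<forall>t<n. H b t * H c t = s3 * H (mul b c) t"
    using product_proportional[OF b c] by blast
  obtain s4 where l4: "\<forall>t<n. H a t * H (mul b c) t = s4 * H (mul a (mul b c)) t"
    using product_proportional[OF a bc] by blast
  have "H (mul (mul a b) c) t = (s3 * s4 / (s1 * s2)) * H (mul a (mul b c)) t" if t: "t < n" for t
  proof -
    have "s1 * s2 * H (mul (mul a b) c) t = H a t * H b t * H c t" using l1 l2 t by simp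
    also have "\<dots> = s3 * s4 * H (mul a (mul b c)) t" using l3 l4 t by (simp add: mult_ac)
    finally show ?thesis using l1 l2 by (simp add: field_simps)
  qed
  then show ?thesis using proportional_rows_eq mul_closed ab bc a c by blast
qed

lemma mul_cancel:
  assumes a: "a < n" and b: "b < n" and b': "b' < n" and e: "mul a b = mul a b'"
  shows "b = b'"
proof -
  obtain s1 where l1: "\<forall>t<n. H a t * H b t = s1 * H (mul a b) t"
    using product_proportional[OF a b] by blast
  obtain s2 where l2: "s2 \<noteq> 0" "\<forall>t<n. H a t * H b' t = s2 * H (mul a b') t"
    using product_proportional[OF a b'] by blast
  have "H b t = (s1 / s2) * H b' t" if t: "t < n" for t
  proof -
    have "H a t * H b t = H a t * ((s1 / s2) * H b' t)" using l1 l2 t e by (simp add: mult_ac)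
    then show ?thesis using entry_nonzero[OF a t] mult_cancel_left by blast
  qed
  then show ?thesis using proportional_rows_eq[OF b b'] by blast
qed

lemma mul_inverse: assumes a: "a < n" shows "\<exists>b<n. mul b a = 0"
proof -
  have "inj_on (mul a) {..<n}" using mul_cancel a by (auto simp: inj_on_def)
  moreover have "mul a ` {..<n} \<subseteq> {..<n}" using mul_closed a by auto
  ultimately have "mul a ` {..<n} = {..<n}" by (simp add: endo_inj_surj)
  then have "0 \<in> mul a ` {..<n}" using n_pos by auto
  then show ?thesis using mul_comm by auto
qed

definition row_group :: "nat monoid" where
  "row_group = \<lparr>carrier = {..<n}, monoid.mult = mul, one = 0\<rparr>"

lemma row_group: "comm_group row_group"
proof (rule comm_groupI)
  fix x assume "x \<in> carrier row_group"
  then obtain b where "b < n" "mul b x = 0" using mul_inverse by (auto simp: row_group_def)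
  then show "\<exists>y\<in>carrier row_group. y \<otimes>\<^bsub>row_group\<^esub> x = \<one>\<^bsub>row_group\<^esub>"
    by (auto simp: row_group_def)
next
  show "x \<otimes>\<^bsub>row_group\<^esub> y = y \<otimes>\<^bsub>row_group\<^esub> x" for x y
    by (simp add: row_group_def mul_comm)
qed (auto simp: row_group_def mul_closed mul_assoc mul_0 n_pos)

lemma row_group_coordinates:
  "\<exists>ds \<phi>. (\<forall>d\<in>set ds. 0 < d) \<and> bij_betw \<phi> {..<n} (cyc_prod ds) \<and>
     (\<forall>a<n. \<forall>b<n. \<phi> (mul a b) = cyc_add ds (\<phi> a) (\<phi> b))"
proof -
  interpret G: comm_group row_group by (rule row_group)
  have fin: "finite (carrier row_group)" by (simp add: row_group_def)
  obtain gs where gs: "set gs \<subseteq> carrier row_group"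
    and bij: "bij_betw (eval_gens row_group gs) (cyc_prod (map G.ord gs)) {..<n}"
    using G.finite_abelian_basis[OF fin G.subgroup_self] by (auto simp: row_group_def)
  define ds where "ds = map G.ord gs"
  define \<phi> where "\<phi> = the_inv_into (cyc_prod ds) (eval_gens row_group gs)"
  have ds: "\<forall>d\<in>set ds. 0 < d"
    using gs G.ord_ge_1[OF fin] unfolding ds_def by (auto simp: Suc_le_eq)
  have bij\<phi>: "bij_betw \<phi> {..<n} (cyc_prod ds)"
    unfolding \<phi>_def ds_def by (rule bij_betw_the_inv_into[OF bij])
  have ev\<phi>: "eval_gens row_group gs (\<phi> a) = a" if "a < n" for a
    unfolding \<phi>_def ds_def using f_the_inv_into_f_bij_betw[OF bij] that by simp
  have hom: "\<phi> (mul a b) = cyc_add ds (\<phi> a) (\<phi> b)" if "a < n" "b < n" for a b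
  proof -
    have "eval_gens row_group gs (cyc_add ds (\<phi> a) (\<phi> b)) = mul a b"
      using G.eval_gens_add[OF gs] ev\<phi> that unfolding ds_def by (simp add: row_group_def)
    moreover have "cyc_add ds (\<phi> a) (\<phi> b) \<in> cyc_prod (map G.ord gs)"
      using cyc_add_in_cyc_prod[OF ds] by (simp add: ds_def)
    ultimately show ?thesis
      unfolding \<phi>_def ds_def using the_inv_into_f_f[OF bij_betw_imp_inj_on[OF bij]] by metis
  qed
  show ?thesis using ds bij\<phi> hom by blast
qed

lemma pair_products_orth:
  assumes a: "a < n" and b: "b < n" and c: "c < n" and d: "d < n"
  shows "cinner {..<n} (rowprod H {#a, b#}) (rowprod H {#c, d#}) = 0 \<longleftrightarrow> mul a b \<noteq> mul c d"
proof -
  obtain s1 where l1: "s1 \<noteq> 0" "\<forall>t<n. H a t * H b t = s1 * H (mul a b) t"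
    using product_proportional[OF a b] by blast
  obtain s2 where l2: "s2 \<noteq> 0" "\<forall>t<n. H c t * H d t = s2 * H (mul c d) t"
    using product_proportional[OF c d] by blast
  have "cinner {..<n} (rowprod H {#a, b#}) (rowprod H {#c, d#})
        = cnj s1 * s2 * cinner {..<n} (H (mul a b)) (H (mul c d))"
    unfolding cinner_def rowprod_pair by (simp add: sum_distrib_left l1 l2 mult_ac)
  also have "\<dots> = cnj s1 * s2 * (if mul a b = mul c d then of_nat n else 0)"
    using inner_rows mul_closed a b c d by simp
  finally show ?thesis using l1 l2 n_pos by auto
qed

end

theorem mainTheorem11:
  fixes n :: nat and H :: "nat \<Rightarrow> nat \<Rightarrow> complex"
  assumes "0 < n"
    and "\<forall>a<n. \<forall>t<n. norm (H a t) = 1"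
    and "\<forall>a<n. \<forall>b<n. a \<noteq> b \<longrightarrow> cinner {..<n} (H a) (H b) = 0"
    and "\<forall>t<n. H 0 t = 1"
    and "\<forall>a<n. \<forall>b<n. \<exists>!c. c < n \<and>
           cinner {..<n} (\<lambda>t. H a t * H b t) (H c) \<noteq> 0"
  shows "\<exists>ds :: nat list. (\<forall>d\<in>set ds. 0 < d) \<and> prod_list ds = n \<and>
          (\<exists>\<phi> :: nat \<Rightarrow> nat list. bij_betw \<phi> {..<n} (cyc_prod ds) \<and>
             Lgraph_iso {..<n} {..<n} H (cyc_prod ds) (cyc_prod ds) (fourier ds)
                        (image_mset \<phi>))"
proof -
  interpret hadamard n H using assms by unfold_locales
  obtain ds \<phi> where ds: "\<forall>d\<in>set ds. 0 < d" and bij: "bij_betw \<phi> {..<n} (cyc_prod ds)"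
    and hom: "\<forall>a<n. \<forall>b<n. \<phi> (mul a b) = cyc_add ds (\<phi> a) (\<phi> b)"
    using row_group_coordinates by blast
  have "prod_list ds = n" using bij_betw_same_card[OF bij] card_cyc_prod by simp
  moreover have "Lgraph_iso {..<n} {..<n} H (cyc_prod ds) (cyc_prod ds) (fourier ds) (image_mset \<phi>)"
  proof (rule Lgraph_iso_by_pairs[OF bij])
    fix i j k l assume "i \<in> {..<n}" "j \<in> {..<n}" "k \<in> {..<n}" "l \<in> {..<n}"
    then have ijkl: "i < n" "j < n" "k < n" "l < n" by auto
    have "cinner {..<n} (rowprod H {#i, j#}) (rowprod H {#k, l#}) = 0 \<longleftrightarrow> mul i j \<noteq> mul k l"
      using pair_products_orth[OF ijkl] .
    also have "\<dots> \<longleftrightarrow> \<phi> (mul i j) \<noteq> \<phi> (mul k l)"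
      using inj_on_eq_iff[OF bij_betw_imp_inj_on[OF bij]] mul_closed ijkl by simp
    also have "\<dots> \<longleftrightarrow> cyc_add ds (\<phi> i) (\<phi> j) \<noteq> cyc_add ds (\<phi> k) (\<phi> l)"
      using hom ijkl by simp
    also have "\<dots> \<longleftrightarrow> cinner (cyc_prod ds) (rowprod (fourier ds) {#\<phi> i, \<phi> j#})
        (rowprod (fourier ds) {#\<phi> k, \<phi> l#}) = 0"
      using fourier_pair_orth[OF ds] bij_betw_apply[OF bij] ijkl by simp
    finally show "cinner {..<n} (rowprod H {#i, j#}) (rowprod H {#k, l#}) = 0 \<longleftrightarrow>
        cinner (cyc_prod ds) (rowprod (fourier ds) {#\<phi> i, \<phi> j#}) (rowprod (fourier ds) {#\<phi> k, \<phi> l#}) = 0" .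
  qed
  ultimately show ?thesis using ds bij by blast
qed

end
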